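(* Let $\alpha,\beta,\gamma$ be partitions with $\alpha_1\le 2$ such that $\beta'_i\le\gamma'_i+1$ for all $i$ (equivalently, every row of an LR-tableau of type $(\alpha,\beta,\gamma)$ contains at most one box). Let $\Delta,\Delta'\in\mathcal D_{\alpha,\gamma}^\beta$. Then $\Delta'\to\Delta$ (i.e. $\Delta'\le_{\rm arc}\Delta$, $\Delta'\ne\Delta$, and there is no $\Delta''$ with $\Delta'<_{\rm arc}\Delta''<_{\rm arc}\Delta$) if and only if $\Delta'$ is obtained from $\Delta$ by a single move of type (A), (B), (C) or (D) and $x(\Delta')=x(\Delta)-1$.
   Context: For a partition $\lambda$, $\lambda'$ is its conjugate. With $\alpha_1\le2$, $\alpha'=(\alpha'_1,\alpha'_2)$. Place the positive integers on a horizontal line in decreasing order from left to right. An arc is a pair $(m,n)$ of positive integers with $m>n$ (source $m$, target $n$), drawn as an upper semicircle; a pole at $n$ is a vertical half-line at $n$, regarded as an arc $(\infty,n)$. An arc diagram of type $(\alpha,\beta,\gamma)$ is a finite multiset of $\alpha'_2$ arcs and $\alpha'_1-\alpha'_2$ poles such that for each $i\ge1$ the number of arcs and poles with source or target $i$ equals $\beta'_i-\gamma'_i$; $\mathcal D_{\alpha,\gamma}^\beta$ is the set of them. Members $(m,n),(k,r)$ cross iff $r<n<k<m$ or $n<r<m<k$; $x(\Delta)$ is the number of crossing pairs in $\Delta$. Moves: for $a>b>c>d$, (A) replaces arcs $(a,c),(b,d)$ by $(a,d),(b,c)$; (C) replaces them by $(a,b),(c,d)$; for $a>b>c$, (B)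 replaces arc $(a,c)$ and pole $(\infty,b)$ by arc $(a,b)$ and pole $(\infty,c)$; (D) replaces them by arc $(b,c)$ and pole $(\infty,a)$; other members unchanged. $\Delta\le_{\rm arc}\Delta'$ iff $\Delta$ is obtained from $\Delta'$ by a finite (possibly empty) sequence of moves. (An LR-tableau of type $(\alpha,\beta,\gamma)$ is a filling of the skew diagram $\beta\setminus\gamma$, whose $i$-th row has $\beta'_i-\gamma'_i$ boxes, as in the usual definition.) *)

theory Defs
  imports Main "HOL-Library.Multiset" "HOL-Library.Extended_Nat"
begin

definition is_partition :: "nat list \<Rightarrow> bool" where
  "is_partition l \<longleftrightarrow> (\<forall>x\<in>set l. 0 < x) \<and> sorted_wrt (\<ge>) l"

text \<open>Conjugate partition, 1-indexed: conj l i = l'_i = number of parts \<ge> i.\<close>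
definition conj :: "nat list \<Rightarrow> nat \<Rightarrow> nat" where
  "conj l i = length (filter (\<lambda>x. i \<le> x) l)"

text \<open>Members of arc diagrams: pairs (source, target); source \<infinity> means a pole.\<close>
type_synonym member = "enat \<times> nat"

definition is_arc :: "member \<Rightarrow> bool" where
  "is_arc p \<longleftrightarrow> fst p \<noteq> \<infinity> \<and> enat (snd p) < fst p \<and> 1 \<le> snd p"

definition is_pole :: "member \<Rightarrow> bool" where
  "is_pole p \<longleftrightarrow> fst p = \<infinity> \<and> 1 \<le> snd p"

definition incid :: "member multiset \<Rightarrow> nat \<Rightarrow> nat" where
  "incid D i = size (filter_mset (\<lambda>p. fst p = enat i \<or> snd p = i) D)"

definition arc_diagrams :: "nat list \<Rightarrow> nat list \<Rightarrow> nat list \<Rightarrow> member multiset set" where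
  "arc_diagrams \<alpha> \<beta> \<gamma> = {D.
     (\<forall>p\<in>#D. is_arc p \<or> is_pole p) \<and>
     size (filter_mset is_arc D) = conj \<alpha> 2 \<and>
     size (filter_mset is_pole D) = conj \<alpha> 1 - conj \<alpha> 2 \<and>
     (\<forall>i\<ge>1. int (incid D i) = int (conj \<beta> i) - int (conj \<gamma> i))}"

definition crosses :: "member \<Rightarrow> member \<Rightarrow> bool" where
  "crosses p q \<longleftrightarrow> (let m = fst p; n = snd p; k = fst q; r = snd q in
     (r < n \<and> enat n < k \<and> k < m) \<or> (n < r \<and> enat r < m \<and> m < k))"

text \<open>Number of crossing (unordered) pairs of members; each pair is counted twice below.\<close>
definition xing :: "member multiset \<Rightarrow> nat" where
  "xing D = sum_mset (image_mset (\<lambda>p. size (filter_mset (crosses p) D)) D) div 2"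

text \<open>arc_move D D': D' is obtained from D by a single move of type (A), (B), (C) or (D).\<close>
definition arc_move :: "member multiset \<Rightarrow> member multiset \<Rightarrow> bool" where
  "arc_move D D' \<longleftrightarrow>
    (\<exists>a b c d::nat. a > b \<and> b > c \<and> c > d \<and>
        {#(enat a, c), (enat b, d)#} \<subseteq># D \<and>
        (D' = D - {#(enat a, c), (enat b, d)#} + {#(enat a, d), (enat b, c)#} \<or>
         D' = D - {#(enat a, c), (enat b, d)#} + {#(enat a, b), (enat c, d)#})) \<or>
    (\<exists>a b c::nat. a > b \<and> b > c \<and>
        {#(enat a, c), (\<infinity>, b)#} \<subseteq># D \<and>
        (D' = D - {#(enat a, c), (\<infinity>, b)#} + {#(enat a, b), (\<infinity>, c)#} \<or>
         D' = D - {#(enat a, c), (\<infinity>, b)#} + {#(enat b, c), (\<infinity>, a)#}))"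

definition arc_le :: "member multiset \<Rightarrow> member multiset \<Rightarrow> bool" where
  "arc_le D' D \<longleftrightarrow> arc_move\<^sup>*\<^sup>* D D'"

definition arc_less :: "member multiset \<Rightarrow> member multiset \<Rightarrow> bool" where
  "arc_less D' D \<longleftrightarrow> arc_le D' D \<and> D' \<noteq> D"

end

theory Submission
  imports Defs
begin

text \<open>
  In a diagram in which every point is an endpoint of at most one member (this is what
  \<open>\<beta>'\<^sub>i \<le> \<gamma>'\<^sub>i + 1\<close> guarantees), each move replaces a crossing pair by a non-crossing one,
  and no other member crosses the new pair more often than the old one. Hence the crossing
  number strictly decreases along moves, so \<open>\<le>\<^sub>a\<^sub>r\<^sub>c\<close>-chains strictly decrease it.
  If a move lowers it by more than one, some third member crosses the old pair more often
  than the new; in each of the eight possible configurations the move then factors through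
  two or three moves involving that member, so it is not a cover. Conversely, a move lowering
  the crossing number by exactly one leaves no room for an intermediate diagram.
\<close>

lemma crosses_sym: "crosses p q = crosses q p"
  by (auto simp: crosses_def Let_def)

lemma crosses_irrefl: "\<not> crosses p p"
  by (auto simp: crosses_def Let_def)

lemma size_filter_mset_conv_sum_mset:
  "size (filter_mset P M) = (\<Sum>x\<in>#M. if P x then 1 else 0)"
  by (induction M) auto

lemma xing_add_mset: "xing (add_mset p D) = xing D + size (filter_mset (crosses p) D)"
proof -
  define T where "T M = (\<Sum>q\<in>#M. size (filter_mset (crosses q) M))" for M
  have "(\<Sum>q\<in>#D. size (filter_mset (crosses q) (add_mset p D)))
      = (\<Sum>q\<in>#D. size (filter_mset (crosses q) D) + (if crosses p q then 1 else 0))"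
    by (intro arg_cong[where f = sum_mset] image_mset_cong) (auto simp: crosses_sym)
  also have "\<dots> = T D + size (filter_mset (crosses p) D)"
    by (simp add: T_def sum_mset.distrib size_filter_mset_conv_sum_mset)
  finally have "T (add_mset p D) = T D + 2 * size (filter_mset (crosses p) D)"
    by (simp add: T_def crosses_irrefl)
  moreover have "xing M = T M div 2" for M
    by (simp add: xing_def T_def)
  ultimately show ?thesis
    by simp
qed

definition pair_crossings :: "member \<Rightarrow> member \<Rightarrow> member \<Rightarrow> nat" where
  "pair_crossings p q e = (if crosses p e then 1 else 0) + (if crosses q e then 1 else 0)"

lemma xing_add_pair:
  "xing (add_mset p (add_mset q R)) =
     xing R + (\<Sum>e\<in>#R. pair_crossings p q e) + (if crosses p q then 1 else 0)"
  by (simp add: xing_add_mset size_filter_mset_conv_sum_mset pair_crossings_def sum_mset.distrib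
      add_ac)

lemma xing_replace_crossing_pair:
  assumes le: "\<And>e. e \<in># R \<Longrightarrow> pair_crossings p' q' e \<le> pair_crossings p q e"
    and "crosses p q" and "\<not> crosses p' q'"
  shows "xing (add_mset p' (add_mset q' R)) < xing (add_mset p (add_mset q R))"
    and "xing (add_mset p' (add_mset q' R)) + 1 \<noteq> xing (add_mset p (add_mset q R)) \<Longrightarrow>
      \<exists>e\<in>#R. pair_crossings p' q' e \<noteq> pair_crossings p q e"
proof -
  have "(\<Sum>e\<in>#R. pair_crossings p' q' e) \<le> (\<Sum>e\<in>#R. pair_crossings p q e)"
    using le by (rule sum_mset_mono)
  then show "xing (add_mset p' (add_mset q' R)) < xing (add_mset p (add_mset q R))"
    using assms by (simp add: xing_add_pair)
next
  assume "xing (add_mset p' (add_mset q' R)) + 1 \<noteq> xing (add_mset p (add_mset q R))"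
  then have "image_mset (pair_crossings p' q') R \<noteq> image_mset (pair_crossings p q) R"
    using assms by (auto simp: xing_add_pair)
  then show "\<exists>e\<in>#R. pair_crossings p' q' e \<noteq> pair_crossings p q e"
    by (auto intro: image_mset_cong)
qed

definition simple_diagram :: "member multiset \<Rightarrow> bool" where
  "simple_diagram D \<longleftrightarrow> (\<forall>p\<in>#D. is_arc p \<or> is_pole p) \<and> (\<forall>i. incid D i \<le> 1)"

lemma arc_diagrams_simple:
  assumes "\<forall>i\<ge>1. conj \<beta> i \<le> conj \<gamma> i + 1" and D: "D \<in> arc_diagrams \<alpha> \<beta> \<gamma>"
  shows "simple_diagram D"
proof -
  have members: "\<forall>p\<in>#D. is_arc p \<or> is_pole p"
    using D by (simp add: arc_diagrams_def)
  have "incid D i \<le> 1" for i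
  proof (cases "i \<ge> 1")
    case True
    then show ?thesis
      using assms by (force simp: arc_diagrams_def)
  next
    case False
    then have "filter_mset (\<lambda>p. fst p = enat i \<or> snd p = i) D = {#}"
      using members by (auto simp: is_arc_def is_pole_def zero_enat_def[symmetric])
    then have "incid D i = 0"
      unfolding incid_def by (simp only: size_empty)
    then show ?thesis
      by simp
  qed
  with members show ?thesis
    by (simp add: simple_diagram_def)
qed

lemma incid_add [simp]: "incid (M + N) i = incid M i + incid N i"
  by (simp add: incid_def)

lemma simple_diagram_disjoint:
  assumes "simple_diagram (P + R)" and "e \<in># R" and "incid P i \<noteq> 0"
  shows "fst e \<noteq> enat i \<and> snd e \<noteq> i"
proof -
  have "incid P i + incid R i \<le> 1"
    using assms(1) by (simp add: simple_diagram_def)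
  with assms(3) have "incid R i = 0"
    by linarith
  with \<open>e \<in># R\<close> show ?thesis
    by (cases e) (auto simp: incid_def filter_mset_eq_conv)
qed

text \<open>
  \<open>V\<close> consists of endpoints of \<open>p\<close> and \<open>q\<close>, which no other member of a simple
  diagram touches; \<open>Q\<close> describes the members that may cross \<open>p', q'\<close> less often than \<open>p, q\<close>.
\<close>
lemma xing_replace_pair:
  assumes D: "simple_diagram D" and sub: "{#p, q#} \<subseteq># D"
    and "crosses p q" and "\<not> crosses p' q'"
    and V: "\<forall>i\<in>V. incid {#p, q#} i \<noteq> 0"
    and change: "\<And>e. is_arc e \<or> is_pole e \<Longrightarrow> fst e \<notin> enat ` V \<Longrightarrow> snd e \<notin> V \<Longrightarrow>
      pair_crossings p' q' e \<le> pair_crossings p q e \<and>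
      (pair_crossings p' q' e \<noteq> pair_crossings p q e \<longrightarrow> Q e)"
  shows "xing (D - {#p, q#} + {#p', q'#}) < xing D \<and>
    (xing (D - {#p, q#} + {#p', q'#}) + 1 \<noteq> xing D \<longrightarrow> (\<exists>e\<in>#D - {#p, q#}. Q e))"
proof -
  define R where "R = D - {#p, q#}"
  have DR: "D = add_mset p (add_mset q R)"
    and D'R: "D - {#p, q#} + {#p', q'#} = add_mset p' (add_mset q' R)"
    using subset_mset.diff_add[OF sub] by (simp_all add: R_def)
  have R_change: "pair_crossings p' q' e \<le> pair_crossings p q e \<and>
      (pair_crossings p' q' e \<noteq> pair_crossings p q e \<longrightarrow> Q e)" if "e \<in># R" for e
  proof (rule change)
    have "simple_diagram ({#p, q#} + R)"
      using D DR by simp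
    then show "fst e \<notin> enat ` V" "snd e \<notin> V"
      using simple_diagram_disjoint[OF _ that] V by blast+
    show "is_arc e \<or> is_pole e"
      using D DR that by (auto simp: simple_diagram_def)
  qed
  note crossing_pair = xing_replace_crossing_pair[where R = R, OF _ assms(3,4)]
  show ?thesis
    unfolding D'R R_def[symmetric] using DR R_change crossing_pair by fastforce
qed

lemma member_cases [consumes 1, case_names arc pole]:
  assumes "is_arc e \<or> is_pole e"
  obtains s t where "e = (enat s, t)" and "t < s"
    | t where "e = (\<infinity>, t)"
  using assms by (cases e) (auto simp: is_arc_def is_pole_def)

lemma pair_crossings_move_A:
  assumes "d < c" "c < b" "b < a" and e: "is_arc e \<or> is_pole e"
    and "fst e \<notin> enat ` {a, b, c, d}" "snd e \<notin> {a, b, c, d}"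
  shows "pair_crossings (enat a, d) (enat b, c) e \<le> pair_crossings (enat a, c) (enat b, d) e \<and>
    (pair_crossings (enat a, d) (enat b, c) e \<noteq> pair_crossings (enat a, c) (enat b, d) e \<longrightarrow>
      (\<exists>s t. e = (enat s, t) \<and> b < s \<and> s < a \<and> d < t \<and> t < c))"
  using e
proof (cases rule: member_cases)
  case (arc s t)
  with assms show ?thesis
    unfolding pair_crossings_def crosses_def
    by (simp add: Let_def nat_neq_iff) (blast dest: less_trans)
next
  case (pole t)
  with assms show ?thesis
    unfolding pair_crossings_def crosses_def by (simp add: Let_def)
qed

lemma pair_crossings_move_C:
  assumes "d < c" "c < b" "b < a" and e: "is_arc e \<or> is_pole e"
    and "fst e \<notin> enat ` {a, b, c, d}" "snd e \<notin> {a, b, c, d}"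
  shows "pair_crossings (enat a, b) (enat c, d) e \<le> pair_crossings (enat a, c) (enat b, d) e \<and>
    (pair_crossings (enat a, b) (enat c, d) e \<noteq> pair_crossings (enat a, c) (enat b, d) e \<longrightarrow>
      (\<exists>s t. e = (enat s, t) \<and> a < s \<and> c < t \<and> t < b) \<or>
      (\<exists>t. e = (\<infinity>, t) \<and> c < t \<and> t < b) \<or>
      (\<exists>s t. e = (enat s, t) \<and> c < s \<and> s < b \<and> t < d))"
  using e
proof (cases rule: member_cases)
  case (arc s t)
  with assms show ?thesis
    unfolding pair_crossings_def crosses_def
    by (simp add: Let_def nat_neq_iff) (blast dest: less_trans)
next
  case (pole t)
  with assms show ?thesis
    unfolding pair_crossings_def crosses_def
    by (simp add: Let_def nat_neq_iff) (blast dest: less_trans)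
qed

lemma pair_crossings_move_B:
  assumes "c < b" "b < a" and e: "is_arc e \<or> is_pole e"
    and "fst e \<notin> enat ` {a, b, c}" "snd e \<notin> {a, b, c}"
  shows "pair_crossings (enat a, b) (\<infinity>, c) e \<le> pair_crossings (enat a, c) (\<infinity>, b) e \<and>
    (pair_crossings (enat a, b) (\<infinity>, c) e \<noteq> pair_crossings (enat a, c) (\<infinity>, b) e \<longrightarrow>
      (\<exists>s t. e = (enat s, t) \<and> a < s \<and> c < t \<and> t < b) \<or>
      (\<exists>t. e = (\<infinity>, t) \<and> c < t \<and> t < b))"
  using e
proof (cases rule: member_cases)
  case (arc s t)
  with assms show ?thesis
    unfolding pair_crossings_def crosses_def
    by (simp add: Let_def nat_neq_iff) (blast dest: less_trans)
next
  case (pole t)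
  with assms show ?thesis
    unfolding pair_crossings_def crosses_def
    by (simp add: Let_def nat_neq_iff) (blast dest: less_trans)
qed

lemma pair_crossings_move_D:
  assumes "c < b" "b < a" and e: "is_arc e \<or> is_pole e"
    and "fst e \<notin> enat ` {a, b, c}" "snd e \<notin> {a, b, c}"
  shows "pair_crossings (enat b, c) (\<infinity>, a) e \<le> pair_crossings (enat a, c) (\<infinity>, b) e \<and>
    (pair_crossings (enat b, c) (\<infinity>, a) e \<noteq> pair_crossings (enat a, c) (\<infinity>, b) e \<longrightarrow>
      (\<exists>s t. e = (enat s, t) \<and> b < s \<and> s < a \<and> t < c) \<or>
      (\<exists>t. e = (\<infinity>, t) \<and> b < t \<and> t < a))"
  using e
proof (cases rule: member_cases)
  case (arc s t)
  with assms show ?thesis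
    unfolding pair_crossings_def crosses_def
    by (simp add: Let_def nat_neq_iff) (blast dest: less_trans)
next
  case (pole t)
  with assms show ?thesis
    unfolding pair_crossings_def crosses_def
    by (simp add: Let_def nat_neq_iff) (blast dest: less_trans)
qed


lemma arc_moveI_A:
  assumes "b < a" "c < b" "d < c"
    and "D = add_mset (enat a, c) (add_mset (enat b, d) R)"
    and "D' = add_mset (enat a, d) (add_mset (enat b, c) R)"
  shows "arc_move D D'"
  unfolding arc_move_def using assms by (intro disjI1 exI[of _ a] exI[of _ b] exI[of _ c] exI[of _ d]) simp

lemma arc_moveI_C:
  assumes "b < a" "c < b" "d < c"
    and "D = add_mset (enat a, c) (add_mset (enat b, d) R)"
    and "D' = add_mset (enat a, b) (add_mset (enat c, d) R)"
  shows "arc_move D D'"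
  unfolding arc_move_def using assms by (intro disjI1 exI[of _ a] exI[of _ b] exI[of _ c] exI[of _ d]) simp

lemma arc_moveI_B:
  assumes "b < a" "c < b"
    and "D = add_mset (enat a, c) (add_mset (\<infinity>, b) R)"
    and "D' = add_mset (enat a, b) (add_mset (\<infinity>, c) R)"
  shows "arc_move D D'"
  unfolding arc_move_def using assms by (intro disjI2 exI[of _ a] exI[of _ b] exI[of _ c]) simp

lemma arc_moveI_D:
  assumes "b < a" "c < b"
    and "D = add_mset (enat a, c) (add_mset (\<infinity>, b) R)"
    and "D' = add_mset (enat b, c) (add_mset (\<infinity>, a) R)"
  shows "arc_move D D'"
  unfolding arc_move_def using assms by (intro disjI2 exI[of _ a] exI[of _ b] exI[of _ c]) simp

lemma relcompp_tranclpI2: "r x y \<Longrightarrow> r y z \<Longrightarrow> (r OO r\<^sup>+\<^sup>+) x z"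
  by (blast intro: tranclp.r_into_trancl)

lemma relcompp_tranclpI3: "r x y \<Longrightarrow> r y z \<Longrightarrow> r z w \<Longrightarrow> (r OO r\<^sup>+\<^sup>+) x w"
  by (blast intro: tranclp.r_into_trancl tranclp.trancl_into_trancl)

lemma arc_move_A_factors:
  assumes o: "s < a" "b < s" "c < b" "t < c" "d < t"
  shows "(arc_move OO arc_move\<^sup>+\<^sup>+)
    (add_mset (enat a, c) (add_mset (enat b, d) (add_mset (enat s, t) R)))
    (add_mset (enat a, d) (add_mset (enat b, c) (add_mset (enat s, t) R)))"
proof (rule relcompp_tranclpI3)
  show "arc_move (add_mset (enat a, c) (add_mset (enat b, d) (add_mset (enat s, t) R)))
     (add_mset (enat a, t) (add_mset (enat b, d) (add_mset (enat s, c) R)))"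
    by (rule arc_moveI_A[where a=a and b=s and c=c and d=t and R="add_mset (enat b, d) R"])
      (use o in \<open>auto simp: add_mset_commute\<close>)
  show "arc_move (add_mset (enat a, t) (add_mset (enat b, d) (add_mset (enat s, c) R)))
     (add_mset (enat a, t) (add_mset (enat b, c) (add_mset (enat s, d) R)))"
    by (rule arc_moveI_A[where a=s and b=b and c=c and d=d and R="add_mset (enat a, t) R"])
      (use o in \<open>auto simp: add_mset_commute\<close>)
  show "arc_move (add_mset (enat a, t) (add_mset (enat b, c) (add_mset (enat s, d) R)))
     (add_mset (enat a, d) (add_mset (enat b, c) (add_mset (enat s, t) R)))"
    by (rule arc_moveI_A[where a=a and b=s and c=t and d=d and R="add_mset (enat b, c) R"])
      (use o in \<open>auto simp: add_mset_commute\<close>)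
qed

lemma arc_move_C_factors_outer_arc:
  assumes o: "a < s" "b < a" "t < b" "c < t" "d < c"
  shows "(arc_move OO arc_move\<^sup>+\<^sup>+)
    (add_mset (enat a, c) (add_mset (enat b, d) (add_mset (enat s, t) R)))
    (add_mset (enat a, b) (add_mset (enat c, d) (add_mset (enat s, t) R)))"
proof (rule relcompp_tranclpI3)
  show "arc_move (add_mset (enat a, c) (add_mset (enat b, d) (add_mset (enat s, t) R)))
     (add_mset (enat a, t) (add_mset (enat b, d) (add_mset (enat s, c) R)))"
    by (rule arc_moveI_A[where a=s and b=a and c=t and d=c and R="add_mset (enat b, d) R"])
      (use o in \<open>auto simp: add_mset_commute\<close>)
  show "arc_move (add_mset (enat a, t) (add_mset (enat b, d) (add_mset (enat s, c) R)))
     (add_mset (enat a, t) (add_mset (enat c, d) (add_mset (enat s, b) R)))"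
    by (rule arc_moveI_C[where a=s and b=b and c=c and d=d and R="add_mset (enat a, t) R"])
      (use o in \<open>auto simp: add_mset_commute\<close>)
  show "arc_move (add_mset (enat a, t) (add_mset (enat c, d) (add_mset (enat s, b) R)))
     (add_mset (enat a, b) (add_mset (enat c, d) (add_mset (enat s, t) R)))"
    by (rule arc_moveI_A[where a=s and b=a and c=b and d=t and R="add_mset (enat c, d) R"])
      (use o in \<open>auto simp: add_mset_commute\<close>)
qed

lemma arc_move_C_factors_pole:
  assumes o: "b < a" "t < b" "c < t" "d < c"
  shows "(arc_move OO arc_move\<^sup>+\<^sup>+)
    (add_mset (enat a, c) (add_mset (enat b, d) (add_mset (\<infinity>, t) R)))
    (add_mset (enat a, b) (add_mset (enat c, d) (add_mset (\<infinity>, t) R)))"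
proof (rule relcompp_tranclpI3)
  show "arc_move (add_mset (enat a, c) (add_mset (enat b, d) (add_mset (\<infinity>, t) R)))
     (add_mset (enat a, t) (add_mset (enat b, d) (add_mset (\<infinity>, c) R)))"
    by (rule arc_moveI_B[where a=a and b=t and c=c and R="add_mset (enat b, d) R"])
      (use o in \<open>auto simp: add_mset_commute\<close>)
  show "arc_move (add_mset (enat a, t) (add_mset (enat b, d) (add_mset (\<infinity>, c) R)))
     (add_mset (enat a, b) (add_mset (enat t, d) (add_mset (\<infinity>, c) R)))"
    by (rule arc_moveI_C[where a=a and b=b and c=t and d=d and R="add_mset (\<infinity>, c) R"])
      (use o in \<open>auto simp: add_mset_commute\<close>)
  show "arc_move (add_mset (enat a, b) (add_mset (enat t, d) (add_mset (\<infinity>, c) R)))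
     (add_mset (enat a, b) (add_mset (enat c, d) (add_mset (\<infinity>, t) R)))"
    by (rule arc_moveI_D[where a=t and b=c and c=d and R="add_mset (enat a, b) R"])
      (use o in \<open>auto simp: add_mset_commute\<close>)
qed

lemma arc_move_C_factors_inner_arc:
  assumes o: "b < a" "s < b" "c < s" "d < c" "t < d"
  shows "(arc_move OO arc_move\<^sup>+\<^sup>+)
    (add_mset (enat a, c) (add_mset (enat b, d) (add_mset (enat s, t) R)))
    (add_mset (enat a, b) (add_mset (enat c, d) (add_mset (enat s, t) R)))"
proof (rule relcompp_tranclpI3)
  show "arc_move (add_mset (enat a, c) (add_mset (enat b, d) (add_mset (enat s, t) R)))
     (add_mset (enat a, c) (add_mset (enat b, t) (add_mset (enat s, d) R)))"
    by (rule arc_moveI_A[where a=b and b=s and c=d and d=t and R="add_mset (enat a, c) R"])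
      (use o in \<open>auto simp: add_mset_commute\<close>)
  show "arc_move (add_mset (enat a, c) (add_mset (enat b, t) (add_mset (enat s, d) R)))
     (add_mset (enat a, b) (add_mset (enat c, t) (add_mset (enat s, d) R)))"
    by (rule arc_moveI_C[where a=a and b=b and c=c and d=t and R="add_mset (enat s, d) R"])
      (use o in \<open>auto simp: add_mset_commute\<close>)
  show "arc_move (add_mset (enat a, b) (add_mset (enat c, t) (add_mset (enat s, d) R)))
     (add_mset (enat a, b) (add_mset (enat c, d) (add_mset (enat s, t) R)))"
    by (rule arc_moveI_A[where a=s and b=c and c=d and d=t and R="add_mset (enat a, b) R"])
      (use o in \<open>auto simp: add_mset_commute\<close>)
qed

lemma arc_move_B_factors_arc:
  assumes o: "a < s" "b < a" "t < b" "c < t"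
  shows "(arc_move OO arc_move\<^sup>+\<^sup>+)
    (add_mset (enat a, c) (add_mset (\<infinity>, b) (add_mset (enat s, t) R)))
    (add_mset (enat a, b) (add_mset (\<infinity>, c) (add_mset (enat s, t) R)))"
proof (rule relcompp_tranclpI3)
  show "arc_move (add_mset (enat a, c) (add_mset (\<infinity>, b) (add_mset (enat s, t) R)))
     (add_mset (enat a, t) (add_mset (\<infinity>, b) (add_mset (enat s, c) R)))"
    by (rule arc_moveI_A[where a=s and b=a and c=t and d=c and R="add_mset (\<infinity>, b) R"])
      (use o in \<open>auto simp: add_mset_commute\<close>)
  show "arc_move (add_mset (enat a, t) (add_mset (\<infinity>, b) (add_mset (enat s, c) R)))
     (add_mset (enat a, t) (add_mset (\<infinity>, c) (add_mset (enat s, b) R)))"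
    by (rule arc_moveI_B[where a=s and b=b and c=c and R="add_mset (enat a, t) R"])
      (use o in \<open>auto simp: add_mset_commute\<close>)
  show "arc_move (add_mset (enat a, t) (add_mset (\<infinity>, c) (add_mset (enat s, b) R)))
     (add_mset (enat a, b) (add_mset (\<infinity>, c) (add_mset (enat s, t) R)))"
    by (rule arc_moveI_A[where a=s and b=a and c=b and d=t and R="add_mset (\<infinity>, c) R"])
      (use o in \<open>auto simp: add_mset_commute\<close>)
qed

lemma arc_move_B_factors_pole:
  assumes o: "b < a" "t < b" "c < t"
  shows "(arc_move OO arc_move\<^sup>+\<^sup>+)
    (add_mset (enat a, c) (add_mset (\<infinity>, b) (add_mset (\<infinity>, t) R)))
    (add_mset (enat a, b) (add_mset (\<infinity>, c) (add_mset (\<infinity>, t) R)))"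
proof (rule relcompp_tranclpI2)
  show "arc_move (add_mset (enat a, c) (add_mset (\<infinity>, b) (add_mset (\<infinity>, t) R)))
     (add_mset (enat a, t) (add_mset (\<infinity>, b) (add_mset (\<infinity>, c) R)))"
    by (rule arc_moveI_B[where a=a and b=t and c=c and R="add_mset (\<infinity>, b) R"])
      (use o in \<open>auto simp: add_mset_commute\<close>)
  show "arc_move (add_mset (enat a, t) (add_mset (\<infinity>, b) (add_mset (\<infinity>, c) R)))
     (add_mset (enat a, b) (add_mset (\<infinity>, c) (add_mset (\<infinity>, t) R)))"
    by (rule arc_moveI_B[where a=a and b=b and c=t and R="add_mset (\<infinity>, c) R"])
      (use o in \<open>auto simp: add_mset_commute\<close>)
qed

lemma arc_move_D_factors_pole:
  assumes o: "t < a" "b < t" "c < b"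
  shows "(arc_move OO arc_move\<^sup>+\<^sup>+)
    (add_mset (enat a, c) (add_mset (\<infinity>, b) (add_mset (\<infinity>, t) R)))
    (add_mset (enat b, c) (add_mset (\<infinity>, a) (add_mset (\<infinity>, t) R)))"
proof (rule relcompp_tranclpI2)
  show "arc_move (add_mset (enat a, c) (add_mset (\<infinity>, b) (add_mset (\<infinity>, t) R)))
     (add_mset (enat t, c) (add_mset (\<infinity>, b) (add_mset (\<infinity>, a) R)))"
    by (rule arc_moveI_D[where a=a and b=t and c=c and R="add_mset (\<infinity>, b) R"])
      (use o in \<open>auto simp: add_mset_commute\<close>)
  show "arc_move (add_mset (enat t, c) (add_mset (\<infinity>, b) (add_mset (\<infinity>, a) R)))
     (add_mset (enat b, c) (add_mset (\<infinity>, a) (add_mset (\<infinity>, t) R)))"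
    by (rule arc_moveI_D[where a=t and b=b and c=c and R="add_mset (\<infinity>, a) R"])
      (use o in \<open>auto simp: add_mset_commute\<close>)
qed

lemma arc_move_D_factors_arc:
  assumes o: "s < a" "b < s" "c < b" "t < c"
  shows "(arc_move OO arc_move\<^sup>+\<^sup>+)
    (add_mset (enat a, c) (add_mset (\<infinity>, b) (add_mset (enat s, t) R)))
    (add_mset (enat b, c) (add_mset (\<infinity>, a) (add_mset (enat s, t) R)))"
proof (rule relcompp_tranclpI3)
  show "arc_move (add_mset (enat a, c) (add_mset (\<infinity>, b) (add_mset (enat s, t) R)))
     (add_mset (enat a, t) (add_mset (\<infinity>, b) (add_mset (enat s, c) R)))"
    by (rule arc_moveI_A[where a=a and b=s and c=c and d=t and R="add_mset (\<infinity>, b) R"])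
      (use o in \<open>auto simp: add_mset_commute\<close>)
  show "arc_move (add_mset (enat a, t) (add_mset (\<infinity>, b) (add_mset (enat s, c) R)))
     (add_mset (enat a, t) (add_mset (enat b, c) (add_mset (\<infinity>, s) R)))"
    by (rule arc_moveI_D[where a=s and b=b and c=c and R="add_mset (enat a, t) R"])
      (use o in \<open>auto simp: add_mset_commute\<close>)
  show "arc_move (add_mset (enat a, t) (add_mset (enat b, c) (add_mset (\<infinity>, s) R)))
     (add_mset (enat b, c) (add_mset (\<infinity>, a) (add_mset (enat s, t) R)))"
    by (rule arc_moveI_D[where a=a and b=s and c=t and R="add_mset (enat b, c) R"])
      (use o in \<open>auto simp: add_mset_commute\<close>)
qed

lemma arc_move_A_xing:
  assumes D: "simple_diagram D" and o: "b < a" "c < b" "d < c"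
    and sub: "{#(enat a, c), (enat b, d)#} \<subseteq># D"
    and D': "D' = D - {#(enat a, c), (enat b, d)#} + {#(enat a, d), (enat b, c)#}"
  shows "xing D' < xing D \<and> (xing D' + 1 \<noteq> xing D \<longrightarrow> (arc_move OO arc_move\<^sup>+\<^sup>+) D D')"
proof -
  define R where "R = D - {#(enat a, c), (enat b, d)#}"
  have DR: "D = add_mset (enat a, c) (add_mset (enat b, d) R)"
    using subset_mset.diff_add[OF sub] by (simp add: R_def)
  have D'R: "D' = add_mset (enat a, d) (add_mset (enat b, c) R)"
    by (simp add: D' R_def)
  have crossing: "crosses (enat a, c) (enat b, d)" "\<not> crosses (enat a, d) (enat b, c)"
    using o by (simp_all add: crosses_def)
  have V: "\<forall>i\<in>{a, b, c, d}. incid {#(enat a, c), (enat b, d)#} i \<noteq> 0"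
    by (simp add: incid_def)
  have xing: "xing D' < xing D \<and> (xing D' + 1 \<noteq> xing D \<longrightarrow>
      (\<exists>e\<in>#R. \<exists>s t. e = (enat s, t) \<and> b < s \<and> s < a \<and> d < t \<and> t < c))"
    unfolding D' R_def
    by (rule xing_replace_pair[OF D sub crossing V]) (rule pair_crossings_move_A[OF o(3,2,1)])
  have "(arc_move OO arc_move\<^sup>+\<^sup>+) D D'" if ne: "xing D' + 1 \<noteq> xing D"
  proof -
    obtain s t where "(enat s, t) \<in># R" and st: "b < s" "s < a" "d < t" "t < c"
      using xing ne by blast
    then obtain R' where "R = add_mset (enat s, t) R'"
      by (metis insert_DiffM)
    then show ?thesis
      unfolding DR D'R using arc_move_A_factors[of s a b c t d R'] o st by simp
  qed
  with xing show ?thesis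
    by blast
qed


lemma arc_move_C_xing:
  assumes D: "simple_diagram D" and o: "b < a" "c < b" "d < c"
    and sub: "{#(enat a, c), (enat b, d)#} \<subseteq># D"
    and D': "D' = D - {#(enat a, c), (enat b, d)#} + {#(enat a, b), (enat c, d)#}"
  shows "xing D' < xing D \<and> (xing D' + 1 \<noteq> xing D \<longrightarrow> (arc_move OO arc_move\<^sup>+\<^sup>+) D D')"
proof -
  define R where "R = D - {#(enat a, c), (enat b, d)#}"
  have DR: "D = add_mset (enat a, c) (add_mset (enat b, d) R)"
    using subset_mset.diff_add[OF sub] by (simp add: R_def)
  have D'R: "D' = add_mset (enat a, b) (add_mset (enat c, d) R)"
    by (simp add: D' R_def)
  have crossing: "crosses (enat a, c) (enat b, d)" "\<not> crosses (enat a, b) (enat c, d)"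
    using o by (simp_all add: crosses_def)
  have V: "\<forall>i\<in>{a, b, c, d}. incid {#(enat a, c), (enat b, d)#} i \<noteq> 0"
    by (simp add: incid_def)
  have xing: "xing D' < xing D \<and> (xing D' + 1 \<noteq> xing D \<longrightarrow> (\<exists>e\<in>#R.
      (\<exists>s t. e = (enat s, t) \<and> a < s \<and> c < t \<and> t < b) \<or>
      (\<exists>t. e = (\<infinity>, t) \<and> c < t \<and> t < b) \<or>
      (\<exists>s t. e = (enat s, t) \<and> c < s \<and> s < b \<and> t < d)))"
    unfolding D' R_def
    by (rule xing_replace_pair[OF D sub crossing V]) (rule pair_crossings_move_C[OF o(3,2,1)])
  have "(arc_move OO arc_move\<^sup>+\<^sup>+) D D'" if ne: "xing D' + 1 \<noteq> xing D"
  proof -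
    obtain e where "e \<in># R" and e: "(\<exists>s t. e = (enat s, t) \<and> a < s \<and> c < t \<and> t < b) \<or>
        (\<exists>t. e = (\<infinity>, t) \<and> c < t \<and> t < b) \<or>
        (\<exists>s t. e = (enat s, t) \<and> c < s \<and> s < b \<and> t < d)"
      using xing ne by blast
    then obtain R' where R: "R = add_mset e R'"
      by (metis insert_DiffM)
    from e show ?thesis
    proof (elim disjE exE conjE)
      fix s t
      assume "e = (enat s, t)" "a < s" "c < t" "t < b"
      then show ?thesis
        unfolding DR D'R R using arc_move_C_factors_outer_arc[of a s b t c d R'] o by simp
    next
      fix t
      assume "e = (\<infinity>, t)" "c < t" "t < b"
      then show ?thesis
        unfolding DR D'R R using arc_move_C_factors_pole[of b a t c d R'] o by simp
    next
      fix s t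
      assume "e = (enat s, t)" "c < s" "s < b" "t < d"
      then show ?thesis
        unfolding DR D'R R using arc_move_C_factors_inner_arc[of b a s c d t R'] o by simp
    qed
  qed
  with xing show ?thesis
    by blast
qed

lemma arc_move_B_xing:
  assumes D: "simple_diagram D" and o: "b < a" "c < b"
    and sub: "{#(enat a, c), (\<infinity>, b)#} \<subseteq># D"
    and D': "D' = D - {#(enat a, c), (\<infinity>, b)#} + {#(enat a, b), (\<infinity>, c)#}"
  shows "xing D' < xing D \<and> (xing D' + 1 \<noteq> xing D \<longrightarrow> (arc_move OO arc_move\<^sup>+\<^sup>+) D D')"
proof -
  define R where "R = D - {#(enat a, c), (\<infinity>, b)#}"
  have DR: "D = add_mset (enat a, c) (add_mset (\<infinity>, b) R)"
    using subset_mset.diff_add[OF sub] by (simp add: R_def)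
  have D'R: "D' = add_mset (enat a, b) (add_mset (\<infinity>, c) R)"
    by (simp add: D' R_def)
  have crossing: "crosses (enat a, c) (\<infinity>, b)" "\<not> crosses (enat a, b) (\<infinity>, c)"
    using o by (auto simp: crosses_def)
  have V: "\<forall>i\<in>{a, b, c}. incid {#(enat a, c), (\<infinity>, b)#} i \<noteq> 0"
    by (simp add: incid_def)
  have xing: "xing D' < xing D \<and> (xing D' + 1 \<noteq> xing D \<longrightarrow> (\<exists>e\<in>#R.
      (\<exists>s t. e = (enat s, t) \<and> a < s \<and> c < t \<and> t < b) \<or>
      (\<exists>t. e = (\<infinity>, t) \<and> c < t \<and> t < b)))"
    unfolding D' R_def
    by (rule xing_replace_pair[OF D sub crossing V]) (rule pair_crossings_move_B[OF o(2,1)])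
  have "(arc_move OO arc_move\<^sup>+\<^sup>+) D D'" if ne: "xing D' + 1 \<noteq> xing D"
  proof -
    obtain e where "e \<in># R" and e: "(\<exists>s t. e = (enat s, t) \<and> a < s \<and> c < t \<and> t < b) \<or>
        (\<exists>t. e = (\<infinity>, t) \<and> c < t \<and> t < b)"
      using xing ne by blast
    then obtain R' where R: "R = add_mset e R'"
      by (metis insert_DiffM)
    from e show ?thesis
    proof (elim disjE exE conjE)
      fix s t
      assume "e = (enat s, t)" "a < s" "c < t" "t < b"
      then show ?thesis
        unfolding DR D'R R using arc_move_B_factors_arc[of a s b t c R'] o by simp
    next
      fix t
      assume "e = (\<infinity>, t)" "c < t" "t < b"
      then show ?thesis
        unfolding DR D'R R using arc_move_B_factors_pole[of b a t c R'] o by simp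
    qed
  qed
  with xing show ?thesis
    by blast
qed

lemma arc_move_D_xing:
  assumes D: "simple_diagram D" and o: "b < a" "c < b"
    and sub: "{#(enat a, c), (\<infinity>, b)#} \<subseteq># D"
    and D': "D' = D - {#(enat a, c), (\<infinity>, b)#} + {#(enat b, c), (\<infinity>, a)#}"
  shows "xing D' < xing D \<and> (xing D' + 1 \<noteq> xing D \<longrightarrow> (arc_move OO arc_move\<^sup>+\<^sup>+) D D')"
proof -
  define R where "R = D - {#(enat a, c), (\<infinity>, b)#}"
  have DR: "D = add_mset (enat a, c) (add_mset (\<infinity>, b) R)"
    using subset_mset.diff_add[OF sub] by (simp add: R_def)
  have D'R: "D' = add_mset (enat b, c) (add_mset (\<infinity>, a) R)"
    by (simp add: D' R_def)
  have crossing: "crosses (enat a, c) (\<infinity>, b)" "\<not> crosses (enat b, c) (\<infinity>, a)"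
    using o by (auto simp: crosses_def)
  have V: "\<forall>i\<in>{a, b, c}. incid {#(enat a, c), (\<infinity>, b)#} i \<noteq> 0"
    by (simp add: incid_def)
  have xing: "xing D' < xing D \<and> (xing D' + 1 \<noteq> xing D \<longrightarrow> (\<exists>e\<in>#R.
      (\<exists>s t. e = (enat s, t) \<and> b < s \<and> s < a \<and> t < c) \<or>
      (\<exists>t. e = (\<infinity>, t) \<and> b < t \<and> t < a)))"
    unfolding D' R_def
    by (rule xing_replace_pair[OF D sub crossing V]) (rule pair_crossings_move_D[OF o(2,1)])
  have "(arc_move OO arc_move\<^sup>+\<^sup>+) D D'" if ne: "xing D' + 1 \<noteq> xing D"
  proof -
    obtain e where "e \<in># R" and e: "(\<exists>s t. e = (enat s, t) \<and> b < s \<and> s < a \<and> t < c) \<or>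
        (\<exists>t. e = (\<infinity>, t) \<and> b < t \<and> t < a)"
      using xing ne by blast
    then obtain R' where R: "R = add_mset e R'"
      by (metis insert_DiffM)
    from e show ?thesis
    proof (elim disjE exE conjE)
      fix s t
      assume "e = (enat s, t)" "b < s" "s < a" "t < c"
      then show ?thesis
        unfolding DR D'R R using arc_move_D_factors_arc[of s a b c t R'] o by simp
    next
      fix t
      assume "e = (\<infinity>, t)" "b < t" "t < a"
      then show ?thesis
        unfolding DR D'R R using arc_move_D_factors_pole[of t a b c R'] o by simp
    qed
  qed
  with xing show ?thesis
    by blast
qed

lemma arc_move_xing:
  assumes "simple_diagram D" and "arc_move D D'"
  shows "xing D' < xing D \<and> (xing D' + 1 \<noteq> xing D \<longrightarrow> (arc_move OO arc_move\<^sup>+\<^sup>+) D D')"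
  using assms(2)[unfolded arc_move_def]
proof (elim disjE exE conjE)
  fix a b c d :: nat
  assume "a > b" "b > c" "c > d" "{#(enat a, c), (enat b, d)#} \<subseteq># D"
    "D' = D - {#(enat a, c), (enat b, d)#} + {#(enat a, d), (enat b, c)#}"
  then show ?thesis
    by (intro arc_move_A_xing[OF assms(1)])
next
  fix a b c d :: nat
  assume "a > b" "b > c" "c > d" "{#(enat a, c), (enat b, d)#} \<subseteq># D"
    "D' = D - {#(enat a, c), (enat b, d)#} + {#(enat a, b), (enat c, d)#}"
  then show ?thesis
    by (intro arc_move_C_xing[OF assms(1)])
next
  fix a b c :: nat
  assume "a > b" "b > c" "{#(enat a, c), (\<infinity>, b)#} \<subseteq># D"
    "D' = D - {#(enat a, c), (\<infinity>, b)#} + {#(enat a, b), (\<infinity>, c)#}"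
  then show ?thesis
    by (intro arc_move_B_xing[OF assms(1)])
next
  fix a b c :: nat
  assume "a > b" "b > c" "{#(enat a, c), (\<infinity>, b)#} \<subseteq># D"
    "D' = D - {#(enat a, c), (\<infinity>, b)#} + {#(enat b, c), (\<infinity>, a)#}"
  then show ?thesis
    by (intro arc_move_D_xing[OF assms(1)])
qed

lemma arc_diagrams_replace:
  assumes D: "D \<in> arc_diagrams \<alpha> \<beta> \<gamma>" and sub: "P \<subseteq># D"
    and "\<forall>p\<in>#P'. is_arc p \<or> is_pole p"
    and "size (filter_mset is_arc P') = size (filter_mset is_arc P)"
    and "size (filter_mset is_pole P') = size (filter_mset is_pole P)"
    and "\<And>i. incid P' i = incid P i"
  shows "D - P + P' \<in> arc_diagrams \<alpha> \<beta> \<gamma>"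
proof -
  define R where "R = D - P"
  have "D = R + P"
    using subset_mset.diff_add[OF sub] by (simp add: R_def)
  with assms show ?thesis
    unfolding R_def[symmetric] by (auto simp: arc_diagrams_def)
qed

lemma arc_move_arc_diagrams:
  assumes D: "D \<in> arc_diagrams \<alpha> \<beta> \<gamma>" and "arc_move D D'"
  shows "D' \<in> arc_diagrams \<alpha> \<beta> \<gamma>"
proof -
  have members: "is_arc p \<or> is_pole p" if "p \<in># D" for p
    using D that by (simp add: arc_diagrams_def)
  have target_pos: "1 \<le> n" if "(m, n) \<in># D" for m n
    using members[OF that] by (auto simp: is_arc_def is_pole_def)
  from \<open>arc_move D D'\<close> show ?thesis
    unfolding arc_move_def
  proof (elim disjE exE conjE)
    fix a b c d :: nat
    assume o: "a > b" "b > c" "c > d" and sub: "{#(enat a, c), (enat b, d)#} \<subseteq># D"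
      and D': "D' = D - {#(enat a, c), (enat b, d)#} + {#(enat a, d), (enat b, c)#}"
    have "1 \<le> d"
      using target_pos[OF mset_subset_eqD[OF sub], of "enat b" d] by simp
    with o show ?thesis
      unfolding D' by (intro arc_diagrams_replace[OF D sub]) (auto simp: is_arc_def is_pole_def incid_def)
  next
    fix a b c d :: nat
    assume o: "a > b" "b > c" "c > d" and sub: "{#(enat a, c), (enat b, d)#} \<subseteq># D"
      and D': "D' = D - {#(enat a, c), (enat b, d)#} + {#(enat a, b), (enat c, d)#}"
    have "1 \<le> d"
      using target_pos[OF mset_subset_eqD[OF sub], of "enat b" d] by simp
    with o show ?thesis
      unfolding D' by (intro arc_diagrams_replace[OF D sub]) (auto simp: is_arc_def is_pole_def incid_def)
  next
    fix a b c :: nat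
    assume o: "a > b" "b > c" and sub: "{#(enat a, c), (\<infinity>, b)#} \<subseteq># D"
      and D': "D' = D - {#(enat a, c), (\<infinity>, b)#} + {#(enat a, b), (\<infinity>, c)#}"
    have "1 \<le> c"
      using target_pos[OF mset_subset_eqD[OF sub], of "enat a" c] by simp
    with o show ?thesis
      unfolding D' by (intro arc_diagrams_replace[OF D sub]) (auto simp: is_arc_def is_pole_def incid_def)
  next
    fix a b c :: nat
    assume o: "a > b" "b > c" and sub: "{#(enat a, c), (\<infinity>, b)#} \<subseteq># D"
      and D': "D' = D - {#(enat a, c), (\<infinity>, b)#} + {#(enat b, c), (\<infinity>, a)#}"
    have "1 \<le> c"
      using target_pos[OF mset_subset_eqD[OF sub], of "enat a" c] by simp
    with o show ?thesis
      unfolding D' by (intro arc_diagrams_replace[OF D sub]) (auto simp: is_arc_def is_pole_def incid_def)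
  qed
qed

context
  fixes \<alpha> \<beta> \<gamma> :: "nat list"
  assumes one_box_per_row: "\<forall>i\<ge>1. conj \<beta> i \<le> conj \<gamma> i + 1"
begin

lemma tranclp_arc_move_xing_less:
  assumes "arc_move\<^sup>+\<^sup>+ D E" and "D \<in> arc_diagrams \<alpha> \<beta> \<gamma>"
  shows "E \<in> arc_diagrams \<alpha> \<beta> \<gamma> \<and> xing E < xing D"
  using assms
proof (induction rule: tranclp_induct)
  case (base E)
  then show ?case
    using arc_move_arc_diagrams arc_move_xing arc_diagrams_simple[OF one_box_per_row] by blast
next
  case (step E F)
  then show ?case
    using arc_move_arc_diagrams arc_move_xing arc_diagrams_simple[OF one_box_per_row]
    by (meson order.strict_trans)
qed

lemma arc_less_xing_less:
  assumes "G \<in> arc_diagrams \<alpha> \<beta> \<gamma>" and "arc_less F G"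
  shows "xing F < xing G"
proof -
  have "arc_move\<^sup>+\<^sup>+ G F"
    using assms(2) unfolding arc_less_def arc_le_def by (metis rtranclpD)
  with assms(1) show ?thesis
    using tranclp_arc_move_xing_less by blast
qed

lemma arc_cover_is_arc_move:
  assumes D: "\<Delta> \<in> arc_diagrams \<alpha> \<beta> \<gamma>" and "arc_less \<Delta>' \<Delta>"
    and cover: "\<not> (\<exists>\<Delta>''\<in>arc_diagrams \<alpha> \<beta> \<gamma>. arc_less \<Delta>' \<Delta>'' \<and> arc_less \<Delta>'' \<Delta>)"
  shows "arc_move \<Delta> \<Delta>' \<and> xing \<Delta>' + 1 = xing \<Delta>"
proof -
  have simple: "simple_diagram \<Delta>"
    using arc_diagrams_simple[OF one_box_per_row D] .
  have no_factor: "\<not> (arc_move OO arc_move\<^sup>+\<^sup>+) \<Delta> \<Delta>'"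
  proof
    assume "(arc_move OO arc_move\<^sup>+\<^sup>+) \<Delta> \<Delta>'"
    then obtain E where move: "arc_move \<Delta> E" and "arc_move\<^sup>+\<^sup>+ E \<Delta>'"
      by blast
    moreover have E: "E \<in> arc_diagrams \<alpha> \<beta> \<gamma>" and "xing E < xing \<Delta>"
      using arc_move_arc_diagrams[OF D move] arc_move_xing[OF simple move] by blast+
    moreover have "xing \<Delta>' < xing E"
      using tranclp_arc_move_xing_less[OF \<open>arc_move\<^sup>+\<^sup>+ E \<Delta>'\<close> E] by blast
    ultimately have "arc_less \<Delta>' E" and "arc_less E \<Delta>"
      by (auto simp: arc_less_def arc_le_def tranclp_into_rtranclp)
    with E cover show False
      by blast
  qed
  obtain E where move: "arc_move \<Delta> E" and "arc_move\<^sup>*\<^sup>* E \<Delta>'"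
    using \<open>arc_less \<Delta>' \<Delta>\<close> by (auto simp: arc_less_def arc_le_def elim: converse_rtranclpE)
  with no_factor have "arc_move \<Delta> \<Delta>'"
    by (metis relcomppI rtranclpD)
  with no_factor arc_move_xing[OF simple] show ?thesis
    by blast
qed

lemma no_intermediate_if_xing_succ:
  assumes D: "\<Delta> \<in> arc_diagrams \<alpha> \<beta> \<gamma>" and "xing \<Delta>' + 1 = xing \<Delta>"
  shows "\<not> (\<exists>\<Delta>''\<in>arc_diagrams \<alpha> \<beta> \<gamma>. arc_less \<Delta>' \<Delta>'' \<and> arc_less \<Delta>'' \<Delta>)"
proof
  assume "\<exists>\<Delta>''\<in>arc_diagrams \<alpha> \<beta> \<gamma>. arc_less \<Delta>' \<Delta>'' \<and> arc_less \<Delta>'' \<Delta>"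
  then obtain \<Delta>'' where "\<Delta>'' \<in> arc_diagrams \<alpha> \<beta> \<gamma>" "arc_less \<Delta>' \<Delta>''" "arc_less \<Delta>'' \<Delta>"
    by blast
  then have "xing \<Delta>' < xing \<Delta>''" and "xing \<Delta>'' < xing \<Delta>"
    using arc_less_xing_less D by blast+
  with assms(2) show False
    by linarith
qed

end

theorem mainTheorem2:
  assumes "is_partition \<alpha>" and "is_partition \<beta>" and "is_partition \<gamma>"
    and "\<forall>x\<in>set \<alpha>. x \<le> 2"
    and "\<forall>i\<ge>1. conj \<beta> i \<le> conj \<gamma> i + 1"
    and "\<Delta> \<in> arc_diagrams \<alpha> \<beta> \<gamma>" and "\<Delta>' \<in> arc_diagrams \<alpha> \<beta> \<gamma>"
  shows "(arc_le \<Delta>' \<Delta> \<and> \<Delta>' \<noteq> \<Delta> \<and>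
          \<not> (\<exists>\<Delta>''\<in>arc_diagrams \<alpha> \<beta> \<gamma>. arc_less \<Delta>' \<Delta>'' \<and> arc_less \<Delta>'' \<Delta>))
     \<longleftrightarrow> (arc_move \<Delta> \<Delta>' \<and> int (xing \<Delta>') = int (xing \<Delta>) - 1)"
proof
  assume "arc_le \<Delta>' \<Delta> \<and> \<Delta>' \<noteq> \<Delta> \<and>
    \<not> (\<exists>\<Delta>''\<in>arc_diagrams \<alpha> \<beta> \<gamma>. arc_less \<Delta>' \<Delta>'' \<and> arc_less \<Delta>'' \<Delta>)"
  with arc_cover_is_arc_move[OF assms(5,6)]
  show "arc_move \<Delta> \<Delta>' \<and> int (xing \<Delta>') = int (xing \<Delta>) - 1"
    by (force simp: arc_less_def)
next
  assume move: "arc_move \<Delta> \<Delta>' \<and> int (xing \<Delta>') = int (xing \<Delta>) - 1"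
  then have "xing \<Delta>' + 1 = xing \<Delta>"
    by linarith
  with move no_intermediate_if_xing_succ[OF assms(5,6)]
  show "arc_le \<Delta>' \<Delta> \<and> \<Delta>' \<noteq> \<Delta> \<and>
    \<not> (\<exists>\<Delta>''\<in>arc_diagrams \<alpha> \<beta> \<gamma>. arc_less \<Delta>' \<Delta>'' \<and> arc_less \<Delta>'' \<Delta>)"
    by (auto simp: arc_le_def)
qed

end
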